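(* Let $\mathcal G$ be a graph on $n$ vertices in which every vertex has the same degree $r$, and let $\mathcal C\subseteq\{0,1\}^n$ be a binary code with $|\mathcal C|\ge 2$. Then the distance of the CWS code $\mathcal Q=(\mathcal G,\mathcal C)$ is at most $r+1$.
   Context: A Pauli operator on $n$ qubits is, up to a phase, $X^{\mathbf v}Z^{\mathbf u}=X_1^{v_1}\cdots X_n^{v_n}Z_1^{u_1}\cdots Z_n^{u_n}$ with $\mathbf v,\mathbf u\in\{0,1\}^n$; its weight is the number of qubits on which it acts as a non-identity operator. For a subspace $\mathcal Q\subseteq(\mathbb C^2)^{\otimes n}$ with orthonormal basis $\{|i\rangle\}$, a Pauli operator $E$ is detectable if $\langle j|E|i\rangle=C_E\delta_{ij}$ for all $i,j$, with $C_E$ independent of $i,j$; the distance of $\mathcal Q$ is the smallest weight of a non-detectable Pauli operator. Let $\mathcal G$ be a simple graph on vertex set $\{1,\dots,n\}$ with adjacency matrix $R\in\{0,1\}^{n\times n}$ (symmetric, zero diagonal) and rows $\mathbf r_i$. The graph-stabilizer generators are $S_i=X_iZ^{\mathbf r_i}$, $i=1,\dots,n$; they commute, generate an abelian group $\mathscr S_{\mathcal G}$, and stabilize a unique (up to phase) state $|s\rangle$, the graph state. For a binary code $\mathcal C\subseteq\{0,1\}^n$ with $K$ words, the CWS code in standard form is $\mathcal Q=(\mathcal G,\mathcal C)=\operatorname{span}\{Z^{\mathbf c}|s\rangle:\mathbf c\in\mathcal C\}$; it has dimension $K$. *)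

theory Defs
  imports Complex_Main "HOL-Library.Extended_Nat"
begin

text \<open>Qubits are indexed by a finite type 'n (n = CARD('n)); computational basis
  states are bit strings 'n \<Rightarrow> bool; n-qubit states are functions from bit strings
  to complex amplitudes.\<close>

type_synonym 'n state = "('n \<Rightarrow> bool) \<Rightarrow> complex"

definition bxor :: "('n \<Rightarrow> bool) \<Rightarrow> ('n \<Rightarrow> bool) \<Rightarrow> ('n \<Rightarrow> bool)" where
  "bxor a b = (\<lambda>i. a i \<noteq> b i)"

definition sign_dot :: "('n::finite \<Rightarrow> bool) \<Rightarrow> ('n \<Rightarrow> bool) \<Rightarrow> complex" where
  "sign_dot u x = (if odd (card {i. u i \<and> x i}) then -1 else 1)"

text \<open>The Pauli operator X^v Z^u: X^v Z^u |x> = (-1)^(u.x) |x + v>.\<close>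
definition pauli :: "('n::finite \<Rightarrow> bool) \<Rightarrow> ('n \<Rightarrow> bool) \<Rightarrow> 'n state \<Rightarrow> 'n state" where
  "pauli v u \<psi> = (\<lambda>y. sign_dot u (bxor y v) * \<psi> (bxor y v))"

definition pauli_weight :: "('n::finite \<Rightarrow> bool) \<Rightarrow> ('n \<Rightarrow> bool) \<Rightarrow> nat" where
  "pauli_weight v u = card {i. v i \<or> u i}"

definition qinner :: "'n::finite state \<Rightarrow> 'n state \<Rightarrow> complex" where
  "qinner \<phi> \<psi> = (\<Sum>x\<in>UNIV. cnj (\<phi> x) * \<psi> x)"

text \<open>Detectability of E for a subspace Q (basis-free form of
  <j|E|i> = C_E \<delta>_ij for an orthonormal basis).\<close>
definition detectable :: "'n::finite state set \<Rightarrow> ('n state \<Rightarrow> 'n state) \<Rightarrow> bool" where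
  "detectable Q E \<longleftrightarrow> (\<exists>c. \<forall>\<phi>\<in>Q. \<forall>\<psi>\<in>Q. qinner \<phi> (E \<psi>) = c * qinner \<phi> \<psi>)"

definition qdistance :: "'n::finite state set \<Rightarrow> enat" where
  "qdistance Q = Inf {enat (pauli_weight v u) | v u. \<not> detectable Q (pauli v u)}"

definition graph_stab :: "('n::finite \<Rightarrow> 'n \<Rightarrow> bool) \<Rightarrow> 'n \<Rightarrow> 'n state \<Rightarrow> 'n state" where
  "graph_stab R i = pauli (\<lambda>j. j = i) (R i)"

definition is_graph_state :: "('n::finite \<Rightarrow> 'n \<Rightarrow> bool) \<Rightarrow> 'n state \<Rightarrow> bool" where
  "is_graph_state R s \<longleftrightarrow> s \<noteq> (\<lambda>_. 0) \<and> (\<forall>i. graph_stab R i s = s)"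

text \<open>CWS code in standard form: span{Z^c |s> : c \<in> C}.\<close>
definition cws_code :: "('n::finite \<Rightarrow> 'n \<Rightarrow> bool) \<Rightarrow> 'n state \<Rightarrow> ('n \<Rightarrow> bool) set \<Rightarrow> 'n state set" where
  "cws_code R s C = {(\<lambda>x. \<Sum>c\<in>C. a c * pauli (\<lambda>_. False) c s x) | a. True}"

end

theory Submission
  imports Defs
begin

(* Let c, c' be two distinct words of the
   code and i a position where they differ.  The stabilizer generator
   S_i = X_i Z^{r_i} has weight deg(i) + 1 = r + 1.  Every basis vector
   Z^c|s> of the CWS code is an eigenvector of S_i with eigenvalue (-1)^{c_i},
   because X_i anticommutes with Z^c exactly when c_i = 1 and S_i|s> = |s>.
   Two code vectors with different eigenvalues rule out a common constant C_E,
   so S_i is not detectable and the distance is at most r + 1. *)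

abbreviation pauli_Z :: "('n::finite \<Rightarrow> bool) \<Rightarrow> 'n state \<Rightarrow> 'n state" where
  "pauli_Z c \<equiv> pauli (\<lambda>_. False) c"

lemma bxor_zero [simp]: "bxor y (\<lambda>_. False) = y"
  by (simp add: bxor_def)

lemma card_flip_parity:
  fixes c y :: "'n::finite \<Rightarrow> bool"
  assumes "c i"
  shows "odd (card {j. c j \<and> bxor y (\<lambda>j. j = i) j}) \<longleftrightarrow> even (card {j. c j \<and> y j})"
proof -
  let ?A = "{j. c j \<and> y j}"
  let ?B = "{j. c j \<and> bxor y (\<lambda>j. j = i) j}"
  have "card ?B = Suc (card ?A) \<or> card ?A = Suc (card ?B)"
  proof (cases "y i")
    case True
    then have "?B = ?A - {i}" "i \<in> ?A" using assms by (auto simp: bxor_def)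
    then have "card ?A = Suc (card ?B)" using card_Suc_Diff1[of ?A i] by simp
    then show ?thesis by simp
  next
    case False
    then have "?B = insert i ?A" "i \<notin> ?A" using assms by (auto simp: bxor_def)
    then show ?thesis by simp
  qed
  then show ?thesis by auto
qed

lemma sign_dot_flip:
  fixes c y :: "'n::finite \<Rightarrow> bool"
  shows "sign_dot c (bxor y (\<lambda>j. j = i)) = (if c i then -1 else 1) * sign_dot c y"
proof (cases "c i")
  case True
  then show ?thesis
    using card_flip_parity[where c=c and y=y and i=i] by (auto simp: sign_dot_def)
next
  case False
  then have "{j. c j \<and> bxor y (\<lambda>j. j = i) j} = {j. c j \<and> y j}"
    by (auto simp: bxor_def)
  then show ?thesis using False by (simp add: sign_dot_def)
qed

(* Z^c |s> is an eigenvector of X_i Z^u with eigenvalue (-1)^{c_i} whenever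
   |s> is fixed by X_i Z^u: the operators X_i and Z^c anticommute iff c_i = 1. *)
lemma Z_eigenvector_of_stabilizer:
  assumes fixed: "pauli (\<lambda>j. j = i) u s = s"
  shows "pauli (\<lambda>j. j = i) u (pauli_Z c s) = (\<lambda>y. (if c i then -1 else 1) * pauli_Z c s y)"
proof
  fix y
  let ?y = "bxor y (\<lambda>j. j = i)"
  have s_y: "s y = sign_dot u ?y * s ?y"
    using fun_cong[OF fixed, of y] by (simp add: pauli_def)
  have "pauli (\<lambda>j. j = i) u (pauli_Z c s) y = sign_dot u ?y * (sign_dot c ?y * s ?y)"
    by (simp add: pauli_def)
  also have "\<dots> = (if c i then -1 else 1) * (sign_dot c y * s y)"
    by (simp add: sign_dot_flip s_y)
  finally show "pauli (\<lambda>j. j = i) u (pauli_Z c s) y = (if c i then -1 else 1) * pauli_Z c s y"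
    by (simp add: pauli_def)
qed

lemma qinner_self_nonzero:
  fixes \<psi> :: "'n::finite state"
  assumes "\<psi> \<noteq> (\<lambda>_. 0)"
  shows "qinner \<psi> \<psi> \<noteq> 0"
proof -
  obtain x where x: "\<psi> x \<noteq> 0" using assms by auto
  have "Re (qinner \<psi> \<psi>) = (\<Sum>y\<in>UNIV. (cmod (\<psi> y))\<^sup>2)"
    unfolding qinner_def by (simp add: Re_sum, simp add: cmod_power2, simp add: power2_eq_square)
  also have "\<dots> > 0"
    by (rule sum_pos2[of UNIV x]) (use x in auto)
  finally show ?thesis by auto
qed

lemma qinner_scale_right: "qinner \<phi> (\<lambda>y. a * \<psi> y) = a * qinner \<phi> \<psi>"
  unfolding qinner_def sum_distrib_left by (simp add: mult.left_commute)

lemma pauli_Z_nonzero: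
  assumes "s \<noteq> (\<lambda>_. 0)"
  shows "pauli_Z c s \<noteq> (\<lambda>_. 0)"
proof -
  obtain x where "s x \<noteq> 0" using assms by auto
  moreover have "sign_dot c x \<noteq> 0" by (simp add: sign_dot_def)
  ultimately have "pauli_Z c s x \<noteq> 0" by (simp add: pauli_def)
  then show ?thesis by auto
qed

lemma pauli_Z_in_cws_code:
  fixes C :: "('n::finite \<Rightarrow> bool) set"
  assumes "c \<in> C"
  shows "pauli_Z c s \<in> cws_code R s C"
proof -
  have "(\<Sum>d\<in>C. (if d = c then 1 else 0) * pauli_Z d s x) = pauli_Z c s x" for x
  proof -
    have "(\<Sum>d\<in>C. (if d = c then 1 else 0) * pauli_Z d s x)
        = (\<Sum>d\<in>C. if d = c then pauli_Z d s x else 0)"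
      by (rule sum.cong) simp_all
    also have "\<dots> = pauli_Z c s x"
      using assms by (simp add: sum.delta[OF finite])
    finally show ?thesis .
  qed
  then have indicator_combination:
    "(\<lambda>x. \<Sum>d\<in>C. (if d = c then 1 else 0) * pauli_Z d s x) = pauli_Z c s"
    by (rule ext)
  show ?thesis
    unfolding cws_code_def mem_Collect_eq
    by (rule exI[where x="\<lambda>d. if d = c then 1 else 0"]) (simp only: indicator_combination simp_thms)
qed

lemma distinct_eigenvalues_not_detectable:
  assumes "\<phi> \<in> Q" "\<psi> \<in> Q"
    and "qinner \<phi> \<phi> \<noteq> 0" "qinner \<psi> \<psi> \<noteq> 0"
    and "E \<phi> = (\<lambda>y. a * \<phi> y)" "E \<psi> = (\<lambda>y. b * \<psi> y)"
    and "a \<noteq> b"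
  shows "\<not> detectable Q E"
proof
  assume "detectable Q E"
  then obtain k where k: "\<forall>\<phi>\<in>Q. \<forall>\<psi>\<in>Q. qinner \<phi> (E \<psi>) = k * qinner \<phi> \<psi>"
    unfolding detectable_def by blast
  have eigenvalue_is_k: "c = k" if "\<chi> \<in> Q" "qinner \<chi> \<chi> \<noteq> 0" "E \<chi> = (\<lambda>y. c * \<chi> y)"
    for \<chi> c
  proof -
    have "c * qinner \<chi> \<chi> = qinner \<chi> (E \<chi>)"
      using that(3) by (simp add: qinner_scale_right)
    also have "\<dots> = k * qinner \<chi> \<chi>"
      using k that(1) by simp
    finally show ?thesis using that(2) by simp
  qed
  have "a = k" "b = k"
    using eigenvalue_is_k[OF assms(1,3,5)] eigenvalue_is_k[OF assms(2,4,6)] by simp_all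
  with \<open>a \<noteq> b\<close> show False by simp
qed

lemma qdistance_le_weight:
  assumes "\<not> detectable Q (pauli v u)"
  shows "qdistance Q \<le> enat (pauli_weight v u)"
  unfolding qdistance_def by (rule Inf_lower) (use assms in blast)

lemma graph_stab_weight:
  fixes R :: "'n::finite \<Rightarrow> 'n \<Rightarrow> bool"
  assumes "\<not> R i i"
  shows "pauli_weight (\<lambda>j. j = i) (R i) = card {j. R i j} + 1"
proof -
  have "{j. j = i \<or> R i j} = insert i {j. R i j}" by auto
  then show ?thesis using assms by (simp add: pauli_weight_def)
qed

theorem corollary1:
  fixes R :: "'n::finite \<Rightarrow> 'n \<Rightarrow> bool"
    and C :: "('n \<Rightarrow> bool) set"
    and s :: "'n state"
    and r :: nat
  assumes "\<forall>i j. R i j = R j i"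
    and "\<forall>i. \<not> R i i"
    and "\<forall>i. card {j. R i j} = r"
    and "card C \<ge> 2"
    and "is_graph_state R s"
  shows "qdistance (cws_code R s C) \<le> enat (r + 1)"
proof -
  obtain c1 c2 where c: "c1 \<in> C" "c2 \<in> C" "c1 \<noteq> c2"
    using assms(4) by (metis One_nat_def card_le_Suc_iff numeral_2_eq_2 insertCI)
  then obtain i where i: "c1 i \<noteq> c2 i" by auto
  have fixed: "pauli (\<lambda>j. j = i) (R i) s = s" and nonzero: "s \<noteq> (\<lambda>_. 0)"
    using assms(5) by (auto simp: is_graph_state_def graph_stab_def)
  have "\<not> detectable (cws_code R s C) (pauli (\<lambda>j. j = i) (R i))"
  proof (rule distinct_eigenvalues_not_detectable)
    show "pauli_Z c1 s \<in> cws_code R s C" "pauli_Z c2 s \<in> cws_code R s C"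
      using c(1,2) by (simp_all only: pauli_Z_in_cws_code)
    show "qinner (pauli_Z c1 s) (pauli_Z c1 s) \<noteq> 0" "qinner (pauli_Z c2 s) (pauli_Z c2 s) \<noteq> 0"
      by (rule qinner_self_nonzero[OF pauli_Z_nonzero[OF nonzero]])+
    show "pauli (\<lambda>j. j = i) (R i) (pauli_Z c1 s) = (\<lambda>y. (if c1 i then -1 else 1) * pauli_Z c1 s y)"
      "pauli (\<lambda>j. j = i) (R i) (pauli_Z c2 s) = (\<lambda>y. (if c2 i then -1 else 1) * pauli_Z c2 s y)"
      by (rule Z_eigenvector_of_stabilizer[OF fixed])+
    show "(if c1 i then -1 else 1) \<noteq> (if c2 i then -1 else (1::complex))"
      using i by simp
  qed
  then have "qdistance (cws_code R s C) \<le> enat (pauli_weight (\<lambda>j. j = i) (R i))"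
    by (rule qdistance_le_weight)
  then show ?thesis
    using graph_stab_weight[of R i] assms(2,3) by simp
qed

end
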